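(* For every integer $t\ge1$, $$-\frac{11}{10t}<\frac{S_2(t)}{\binom{-3/2}{t}}-\frac{(-1)^t}{\binom{-3/2}{t}}\cosh\alpha+\frac{\sinh\alpha}{\alpha}<\frac1t.$$
   Context: $\alpha=\pi/6$. $(a)_m=a(a+1)\cdots(a+m-1)$ is the rising factorial ($(a)_0=1$); $\binom{x}{m}=x(x-1)\cdots(x-m+1)/m!$ for $m\ge1$, $\binom{x}{0}=1$. For $t\ge1$, $$S_2(t)=\sum_{s=0}^{t-1}(1/2-s)_{s+1}\binom{-3/2}{t-s-1}\sum_{u=0}^s\frac{(-1)^u(-s)_u}{(s+u+1)!\,(2u)!}\left(\frac{\pi^2}{36}\right)^u.$$ *)

theory Defs
  imports Complex_Main
begin

definition alpha :: real where "alpha = pi / 6"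

definition S2 :: "nat \<Rightarrow> real" where
  "S2 t = (\<Sum>s<t. pochhammer (1/2 - real s) (s+1) * ((-3/2) gchoose (t - s - 1)) *
      (\<Sum>u\<le>s. (-1)^u * pochhammer (- real s) u / (fact (s+u+1) * fact (2*u)) * (pi^2/36)^u))"

end

theory Submission
  imports Defs "HOL-Computational_Algebra.Formal_Power_Series"
begin

text \<open>
  Let \<open>b\<^sub>m = bcoef m\<close> be the coefficients of \<open>(1 - z) powr (-3/2)\<close> and \<open>w = 1 - sqrt (1 - z)\<close>,
  so that \<open>wcoef k n\<close> and \<open>conv_coef k m\<close> are the coefficients of \<open>w^k\<close> and of \<open>w^k (1 - z) powr (-3/2)\<close>.
  Summing over \<open>s\<close> first, \<open>S2 t / binom(-3/2, t)\<close> equals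
  \<open>-(1/b\<^sub>t) \<Sum>\<^sub>u \<alpha>^(2u) / (2u+1)! * conv_coef (2u+1) (t+u)\<close>. Subtracting the series of
  \<open>cosh \<alpha> / b\<^sub>t\<close> and \<open>sinh \<alpha> / \<alpha>\<close> termwise leaves \<open>-\<Sum>\<^sub>u \<alpha>^(2u) odd_defect u t / ((2u+1)! b\<^sub>t)\<close>,
  whose \<open>u = 0\<close> term vanishes. The identity \<open>w^2 = 2w - z\<close> couples the even and odd defects in a
  recursion giving \<open>|odd_defect u t| \<le> (8^u - 1) b\<^sub>t / (t + 1)\<close>, and comparison with a geometric
  series in \<open>\<pi>^2/90\<close> bounds the whole quantity in absolute value by \<open>1 / (t + 1)\<close>.
\<close>

lemma gbinomial_Suc_eq: "(a::real) gchoose (Suc k) = (a - of_nat k) / (of_nat k + 1) * (a gchoose k)"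
proof -
  have "a * (a gchoose k) = of_nat k * (a gchoose k) + of_nat (Suc k) * (a gchoose (Suc k))"
    by (rule gbinomial_mult_1)
  then show ?thesis by (simp add: field_simps)
qed

definition bcoef :: "nat \<Rightarrow> real" where "bcoef m = (-1)^m * ((-3/2) gchoose m)"

lemma gbinomial_neg_three_halves: "((-3/2::real) gchoose m) = (-1)^m * bcoef m"
  unfolding bcoef_def by (simp add: power_mult_distrib[symmetric])

lemma bcoef_0 [simp]: "bcoef 0 = 1"
  by (simp add: bcoef_def)

lemma bcoef_Suc: "bcoef (Suc m) = bcoef m * (2 * real m + 3) / (2 * real m + 2)"
  unfolding bcoef_def gbinomial_Suc_eq by (simp add: field_simps)

lemma bcoef_pos: "bcoef m > 0"
  by (induction m) (simp_all add: bcoef_Suc)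

lemma bcoef_Suc_diff: "2 * (bcoef (Suc t) - bcoef t) = bcoef t / (real t + 1)"
  unfolding bcoef_Suc by (simp add: field_simps)

lemma bcoef_div_Suc_antimono: "bcoef (Suc t) / (real (Suc t) + 1) \<le> bcoef t / (real t + 1)"
proof -
  have "bcoef (Suc t) / (real (Suc t) + 1) = bcoef t * ((2 * real t + 3) / ((2 * real t + 2) * (real t + 2)))"
    unfolding bcoef_Suc by (simp add: field_simps)
  also have "\<dots> \<le> bcoef t * (1 / (real t + 1))"
  proof (rule mult_left_mono)
    have "(2 * real t + 3) * (real t + 1) \<le> (2 * real t + 2) * (real t + 2)"
      by (simp add: algebra_simps)
    then show "(2 * real t + 3) / ((2 * real t + 2) * (real t + 2)) \<le> 1 / (real t + 1)"
      by (simp add: divide_simps)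
  qed (use bcoef_pos[of t] in simp)
  finally show ?thesis by simp
qed

text \<open>The recursion in \<open>k\<close> below is the identity \<open>w^2 = 2w - z\<close>.\<close>

definition wcoef :: "nat \<Rightarrow> nat \<Rightarrow> real" where
  "wcoef k n = (if k = 0 then (if n = 0 then 1 else 0) else if n < k then 0
     else of_nat k * fact (2*n-k-1) / (fact n * fact (n-k) * 2^(2*n-k)))"

lemma wcoef_eq_0: "n < k \<Longrightarrow> wcoef k n = 0"
  by (simp add: wcoef_def)

lemma wcoef_closed:
  "wcoef (Suc i) (Suc i + j) = of_nat (Suc i) * fact (i + 2*j) / (fact (Suc i + j) * fact j * 2^(Suc i + 2*j))"
proof -
  have "2 * (Suc i + j) - Suc i - 1 = i + 2*j" "2 * (Suc i + j) - Suc i = Suc i + 2*j" by simp_all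
  then show ?thesis unfolding wcoef_def by simp
qed

lemma wcoef_diag: "wcoef (Suc i) (Suc i) = 1 / 2^(Suc i)"
  using wcoef_closed[of i 0] by (simp del: fact_Suc add: fact_Suc[of i])

lemma wcoef_rec_first: "wcoef 2 (m+2) = 2 * wcoef 1 (m+2)"
proof -
  have a: "wcoef 2 (m+2) = 2 * fact (1 + 2*m) / (fact (2+m) * fact m * 2^(2+2*m))"
    using wcoef_closed[of 1 m] by (simp add: numeral_2_eq_2 add.commute)
  have b: "wcoef 1 (m+2) = fact (2*m+2) / (fact (m+2) * fact (m+1) * 2^(2*m+3))"
    using wcoef_closed[of 0 "m+1"] by (simp add: numeral_3_eq_3 numeral_2_eq_2 add.commute)
  have f1: "fact (2*m+2) = (2*of_nat m+2) * (fact (2*m+1) :: real)"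
    by (simp add: fact_Suc[of "2*m+1", simplified] algebra_simps)
  have f2: "fact (m+1) = (of_nat m+1) * (fact m :: real)" by simp
  show ?thesis
    unfolding a b f1 f2 by (simp add: divide_simps power_add del: fact_Suc)
qed

lemma wcoef_rec_off_diag:
  "wcoef (i+3) (i+3+j) = 2 * wcoef (i+2) (i+3+j) - wcoef (i+1) (i+2+j)"
proof -
  have a: "wcoef (i+3) (i+3+j) = of_nat (i+3) * fact (i+2+2*j) / (fact (i+3+j) * fact j * 2^(i+3+2*j))"
    using wcoef_closed[of "i+2" j] by (simp add: eval_nat_numeral add.commute add.left_commute)
  have b: "wcoef (i+2) (i+3+j) = of_nat (i+2) * fact (i+3+2*j) / (fact (i+3+j) * fact (j+1) * 2^(i+4+2*j))"
    using wcoef_closed[of "i+1" "j+1"] by (simp add: eval_nat_numeral add.commute add.left_commute)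
  have c: "wcoef (i+1) (i+2+j) = of_nat (i+1) * fact (i+2+2*j) / (fact (i+2+j) * fact (j+1) * 2^(i+3+2*j))"
    using wcoef_closed[of "i" "j+1"] by (simp add: eval_nat_numeral add.commute add.left_commute)
  have f1: "fact (i+3+2*j) = (of_nat i + 3 + 2*of_nat j) * (fact (i+2+2*j) :: real)"
    using fact_Suc[of "i+2+2*j"] by (simp add: eval_nat_numeral algebra_simps)
  have f2: "fact (i+3+j) = (of_nat i + 3 + of_nat j) * (fact (i+2+j) :: real)"
    using fact_Suc[of "i+2+j"] by (simp add: eval_nat_numeral algebra_simps)
  have f3: "fact (j+1) = (of_nat j + 1) * (fact j :: real)" by simp
  show ?thesis
    unfolding a b c f1 f2 f3
    by (simp add: divide_simps power_add del: fact_Suc) (simp add: algebra_simps)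
qed

lemma wcoef_rec: "wcoef (k+2) (n+1) = 2 * wcoef (k+1) (n+1) - wcoef k n"
proof (cases k)
  case 0
  show ?thesis
  proof (cases n)
    case (Suc m)
    then show ?thesis using \<open>k = 0\<close> wcoef_rec_first[of m] by (simp add: wcoef_def)
  qed (simp add: \<open>k = 0\<close> wcoef_def)
next
  case (Suc i)
  consider "n < k" | "n = k" | j where "n = Suc k + j"
    by (metis add_Suc less_imp_Suc_add linorder_neqE_nat)
  then show ?thesis
  proof cases
    case 2
    have "wcoef (i+3) (i+2) = 2 * wcoef (i+2) (i+2) - wcoef (i+1) (i+1)"
      using wcoef_diag[of i] wcoef_diag[of "Suc i"] by (simp add: wcoef_def)
    then show ?thesis using 2 Suc by (simp add: eval_nat_numeral)
  next
    case 3
    then show ?thesis using wcoef_rec_off_diag[of i j] Suc by (simp add: eval_nat_numeral)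
  qed (simp add: wcoef_def)
qed

lemma wcoef_one: "wcoef 1 (Suc j) = - ((-1)^(Suc j) * ((1/2::real) gchoose (Suc j)))"
proof (induction j)
  case 0
  then show ?case by (simp add: wcoef_def)
next
  case (Suc j)
  have a: "wcoef 1 (Suc j) = fact (2*j) / (fact (Suc j) * fact j * 2^(Suc (2*j)))"
    using wcoef_closed[of 0 j] by simp
  have b: "wcoef 1 (Suc (Suc j)) = fact (2*j+2) / (fact (Suc (Suc j)) * fact (Suc j) * 2^(2*j+3))"
    using wcoef_closed[of 0 "Suc j"] by (simp add: eval_nat_numeral)
  have f: "fact (2*j+2) = (2*of_nat j+2) * (2 * of_nat j + 1) * (fact (2*j)::real)"
    using fact_Suc[of "2*j+1"] fact_Suc[of "2*j"] by (simp add: algebra_simps)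
  have "wcoef 1 (Suc (Suc j)) = wcoef 1 (Suc j) * ((2*of_nat j+1) / (2*(of_nat j+2)))"
    unfolding a b f by (simp add: divide_simps power_add del: fact_Suc) (simp add: algebra_simps)
  also have "\<dots> = - ((-1)^(Suc (Suc j)) * ((1/2::real) gchoose (Suc (Suc j))))"
    unfolding Suc gbinomial_Suc_eq[of "1/2" "Suc j"] by (simp add: field_simps)
  finally show ?case .
qed

definition conv_coef :: "nat \<Rightarrow> nat \<Rightarrow> real" where
  "conv_coef k m = (\<Sum>n\<le>m. wcoef k n * bcoef (m - n))"

lemma conv_coef_rec: "conv_coef (k+2) (m+1) = 2 * conv_coef (k+1) (m+1) - conv_coef k m"
proof -
  have shift: "conv_coef (Suc j) (m+1) = (\<Sum>n\<le>m. wcoef (Suc j) (Suc n) * bcoef (m - n))" for j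
    unfolding conv_coef_def Suc_eq_plus1[symmetric] sum.atMost_Suc_shift by (simp add: wcoef_eq_0)
  have "conv_coef (k+2) (m+1) = (\<Sum>n\<le>m. wcoef (k+2) (Suc n) * bcoef (m - n))"
    using shift[of "k+1"] by simp
  also have "\<dots> = (\<Sum>n\<le>m. 2 * (wcoef (k+1) (Suc n) * bcoef (m - n)) - wcoef k n * bcoef (m - n))"
    by (intro sum.cong refl) (simp add: wcoef_rec[simplified] algebra_simps)
  also have "\<dots> = 2 * conv_coef (k+1) (m+1) - conv_coef k m"
    using shift[of k] unfolding conv_coef_def by (simp add: sum_subtractf sum_distrib_left)
  finally show ?thesis .
qed

lemma conv_coef_0: "conv_coef 0 m = bcoef m"
proof -
  have "conv_coef 0 m = (\<Sum>n\<le>m. if n = 0 then bcoef m else 0)"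
    unfolding conv_coef_def by (intro sum.cong refl) (simp add: wcoef_def)
  then show ?thesis by (simp add: sum.delta)
qed

text \<open>The Vandermonde convolution of \<open>1/2\<close> and \<open>-3/2\<close>, since \<open>(-1 gchoose m) = (-1)\<^sup>m\<close>.\<close>

lemma conv_coef_1: "conv_coef 1 m = bcoef m - 1"
proof -
  have wcoef_1: "wcoef 1 n = wcoef 0 n - (-1)^n * ((1/2::real) gchoose n)" for n
    by (cases n) (simp add: wcoef_def, simp only: wcoef_one, simp add: wcoef_def)
  have sign: "(-1::real)^n * ((1/2::real) gchoose n) * bcoef (m - n)
      = (-1)^m * (((1/2::real) gchoose n) * ((-3/2) gchoose (m - n)))" if "n \<le> m" for n
  proof -
    have "(-1::real)^n * (-1)^(m-n) = (-1)^m" using that by (simp add: power_add[symmetric])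
    then show ?thesis
      unfolding bcoef_def by (metis (no_types, lifting) mult.assoc mult.left_commute)
  qed
  have "(\<Sum>n\<le>m. ((1/2::real) gchoose n) * ((-3/2) gchoose (m - n))) = (-1)^m"
    using gbinomial_Vandermonde[of "1/2::real" "-3/2" m] gbinomial_minus[of 1 m]
    by (simp add: atLeast0AtMost binomial_gbinomial[symmetric])
  moreover have "(\<Sum>n\<le>m. (-1::real)^n * ((1/2::real) gchoose n) * bcoef (m - n))
      = (-1)^m * (\<Sum>n\<le>m. ((1/2::real) gchoose n) * ((-3/2) gchoose (m - n)))"
    unfolding sum_distrib_left by (intro sum.cong refl sign) simp
  ultimately have "(\<Sum>n\<le>m. (-1::real)^n * ((1/2::real) gchoose n) * bcoef (m - n)) = 1"
    by (simp add: power_add[symmetric] mult_2[symmetric])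
  then show ?thesis
    using conv_coef_0[of m] unfolding conv_coef_def wcoef_1 left_diff_distrib sum_subtractf by simp
qed

lemma conv_coef_eq_0: "t \<le> u \<Longrightarrow> conv_coef (2*u+1) (t+u) = 0"
  unfolding conv_coef_def by (intro sum.neutral) (auto simp: wcoef_eq_0)

lemma conv_coef_odd_shift: "(\<Sum>s<t. wcoef (2*u+1) (s+u+1) * bcoef (t-1-s)) = conv_coef (2*u+1) (t+u)"
proof -
  let ?g = "\<lambda>n. wcoef (2*u+1) n * bcoef (t+u-n)"
  let ?h = "\<lambda>s. s+u+1"
  have inj: "inj_on ?h {..<t}" by (auto simp: inj_on_def)
  have sub: "?h ` {..<t} \<subseteq> {..t+u}" by auto
  have zero: "\<forall>n \<in> {..t+u} - ?h ` {..<t}. ?g n = 0"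
  proof
    fix n assume n: "n \<in> {..t+u} - ?h ` {..<t}"
    have "n \<le> u"
    proof (rule ccontr)
      assume "\<not> n \<le> u"
      then have "n = ?h (n-u-1)" "n - u - 1 < t" using n by auto
      then show False using n by blast
    qed
    then show "?g n = 0" by (simp add: wcoef_eq_0)
  qed
  then have "conv_coef (2*u+1) (t+u) = sum ?g (?h ` {..<t})"
    unfolding conv_coef_def using sum.mono_neutral_right[OF _ sub zero] by simp
  also have "\<dots> = (\<Sum>s<t. ?g (?h s))"
    by (rule sum.reindex_cong[OF inj refl]) simp
  finally show ?thesis by (simp add: algebra_simps)
qed

definition even_defect :: "nat \<Rightarrow> nat \<Rightarrow> real" where
  "even_defect u t = conv_coef (2*u) (t+u) - bcoef t + 2 * real u"

definition odd_defect :: "nat \<Rightarrow> nat \<Rightarrow> real" where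
  "odd_defect u t = conv_coef (2*u+1) (t+u) - bcoef t + (2 * real u + 1)"

lemma odd_defect_0 [simp]: "odd_defect 0 t = 0"
  using conv_coef_1[of t] by (simp add: odd_defect_def)

lemma even_defect_Suc:
  "even_defect (Suc u) t = 2 * odd_defect u (Suc t) + bcoef t / (real t + 1) - even_defect u t"
proof -
  have "conv_coef (2 * Suc u) (t + Suc u) = 2 * conv_coef (2*u+1) (Suc t + u) - conv_coef (2*u) (t+u)"
    using conv_coef_rec[of "2*u" "t+u"] by (simp add: algebra_simps)
  then show ?thesis
    using bcoef_Suc_diff[of t] unfolding even_defect_def odd_defect_def by (simp add: algebra_simps)
qed

lemma odd_defect_Suc: "odd_defect (Suc u) t = 2 * even_defect (Suc u) t - odd_defect u t"
proof -
  have "conv_coef (2 * Suc u + 1) (t + Suc u) = 2 * conv_coef (2 * Suc u) (t + Suc u) - conv_coef (2*u+1) (t+u)"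
    using conv_coef_rec[of "2*u+1" "t+u"] by (simp add: algebra_simps)
  then show ?thesis unfolding even_defect_def odd_defect_def by (simp add: algebra_simps)
qed

lemma defect_bounds:
  "\<bar>even_defect u t\<bar> \<le> (8^u - 1) / 2 * (bcoef t / (real t + 1)) \<and>
   \<bar>odd_defect u t\<bar> \<le> (8^u - 1) * (bcoef t / (real t + 1))"
proof (induction u arbitrary: t)
  case 0
  then show ?case by (simp add: even_defect_def conv_coef_0)
next
  case (Suc u)
  define g where "g = bcoef t / (real t + 1)"
  have g: "g > 0" unfolding g_def using bcoef_pos[of t] by simp
  have IH: "\<bar>even_defect u t\<bar> \<le> (8^u - 1) / 2 * g" "\<bar>odd_defect u t\<bar> \<le> (8^u - 1) * g"
    using Suc unfolding g_def by blast+
  have "\<bar>odd_defect u (Suc t)\<bar> \<le> (8^u - 1) * (bcoef (Suc t) / (real (Suc t) + 1))"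
    using Suc by blast
  also have "\<dots> \<le> (8^u - 1) * g"
    unfolding g_def by (intro mult_left_mono bcoef_div_Suc_antimono) simp
  finally have IH_Suc: "\<bar>odd_defect u (Suc t)\<bar> \<le> (8^u - 1) * g" .
  have even: "\<bar>even_defect (Suc u) t\<bar> \<le> (5/2 * 8^u - 3/2) * g"
  proof -
    have "\<bar>even_defect (Suc u) t\<bar> \<le> 2 * \<bar>odd_defect u (Suc t)\<bar> + g + \<bar>even_defect u t\<bar>"
      unfolding even_defect_Suc g_def[symmetric] using g by linarith
    then show ?thesis using IH IH_Suc by (simp add: algebra_simps)
  qed
  have odd: "\<bar>odd_defect (Suc u) t\<bar> \<le> (6 * 8^u - 4) * g"
  proof -
    have "\<bar>odd_defect (Suc u) t\<bar> \<le> 2 * \<bar>even_defect (Suc u) t\<bar> + \<bar>odd_defect u t\<bar>"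
      unfolding odd_defect_Suc by linarith
    then show ?thesis using even IH by (simp add: algebra_simps)
  qed
  have "(1::real) \<le> 8^u" by simp
  then have "(5/2 * 8^u - 3/2) * g \<le> (8^Suc u - 1) / 2 * g" "(6 * 8^u - 4) * g \<le> (8^Suc u - 1) * g"
    using g by (auto intro!: mult_right_mono)
  then show ?case using even odd unfolding g_def by linarith
qed

lemma pochhammer_half_minus: "pochhammer (1/2 - real s) (s+1) = (-1)^s * wcoef 1 (Suc s) * fact (Suc s)"
proof -
  have "pochhammer (1/2 - real s) (s+1) = fact (Suc s) * ((1/2::real) gchoose (Suc s))"
    using gbinomial_pochhammer'[of "1/2::real" "s+1"] by simp
  then show ?thesis unfolding wcoef_one by simp
qed

lemma pochhammer_minus_nat: "u \<le> s \<Longrightarrow> (-1)^u * pochhammer (- real s) u = fact s / fact (s - u)"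
proof -
  assume us: "u \<le> s"
  have "(-1)^u * pochhammer (- real s) u = pochhammer (real s - real u + 1) u"
    unfolding pochhammer_minus by simp
  also have "\<dots> = fact u * (real s gchoose u)"
    using gbinomial_pochhammer'[of "real s" u] by simp
  also have "\<dots> = fact s / fact (s - u)"
    unfolding binomial_gbinomial[symmetric] binomial_fact[OF us] by simp
  finally show ?thesis .
qed

lemma wcoef_odd_closed: "u \<le> s \<Longrightarrow>
  wcoef (2*u+1) (s+u+1) = (2 * real u + 1) * fact (2*s) / (fact (s+u+1) * fact (s-u) * 2^(2*s+1))"
proof -
  assume us: "u \<le> s"
  have "Suc (2*u) + (s-u) = s+u+1" "2*u + 2*(s-u) = 2*s" "Suc (2*u) + 2*(s-u) = 2*s+1"
    using us by auto
  then show ?thesis using wcoef_closed[of "2*u" "s-u"] by (simp add: ac_simps)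
qed

lemma S2_summand_eq:
  assumes us: "u \<le> s" and st: "s < t"
  shows "pochhammer (1/2 - real s) (s+1) * ((-3/2) gchoose (t - s - 1)) *
      ((-1)^u * pochhammer (- real s) u / (fact (s+u+1) * fact (2*u)) * (x::real)^u)
    = (-1)^(t-1) * (wcoef (2*u+1) (s+u+1) * bcoef (t-1-s)) * (x^u / fact (2*u+1))"
proof -
  have sign: "(-1::real)^s * (-1)^(t-s-1) = (-1)^(t-1)"
    using st by (simp add: power_add[symmetric])
  have wcoef_odd: "wcoef 1 (Suc s) * fact (Suc s) * (fact s / fact (s - u)) / (fact (s+u+1) * fact (2*u))
     = wcoef (2*u+1) (s+u+1) / fact (2*u+1)"
  proof -
    have "wcoef 1 (Suc s) = fact (2*s) / (fact (Suc s) * fact s * 2^(Suc (2*s)))"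
      using wcoef_closed[of 0 s] by simp
    moreover have "fact (2*u+1) = (2 * real u + 1) * fact (2*u)" by simp
    ultimately show ?thesis
      unfolding wcoef_odd_closed[OF us] by (simp add: divide_simps del: fact_Suc)
  qed
  have "pochhammer (1/2 - real s) (s+1) * ((-3/2) gchoose (t - s - 1)) *
      ((-1)^u * pochhammer (- real s) u / (fact (s+u+1) * fact (2*u)) * x^u)
     = ((-1::real)^s * (-1)^(t-s-1)) * (wcoef 1 (Suc s) * fact (Suc s) * (fact s / fact (s - u))
         / (fact (s+u+1) * fact (2*u))) * bcoef (t-1-s) * x^u"
    unfolding pochhammer_half_minus gbinomial_neg_three_halves pochhammer_minus_nat[OF us, symmetric]
    by (simp add: field_simps)
  then show ?thesis
    unfolding sign wcoef_odd by (simp add: field_simps)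
qed

lemma S2_eq_conv_coef:
  "S2 t = (-1)^(t-1) * (\<Sum>u<t. (pi^2/36)^u / fact (2*u+1) * conv_coef (2*u+1) (t+u))"
proof -
  let ?x = "pi^2/36::real"
  let ?F = "\<lambda>s u. (-1)^(t-1) * (wcoef (2*u+1) (s+u+1) * bcoef (t-1-s)) * (?x^u / fact (2*u+1))"
  have "S2 t = (\<Sum>s<t. \<Sum>u\<le>s. ?F s u)"
    unfolding S2_def sum_distrib_left by (intro sum.cong refl S2_summand_eq) auto
  also have "\<dots> = (\<Sum>s<t. \<Sum>u<t. ?F s u)"
    by (intro sum.cong refl sum.mono_neutral_left) (auto simp: wcoef_eq_0)
  also have "\<dots> = (\<Sum>u<t. \<Sum>s<t. ?F s u)"
    by (rule sum.swap)
  also have "\<dots> = (\<Sum>u<t. (-1)^(t-1) * (?x^u / fact (2*u+1) * (\<Sum>s<t. wcoef (2*u+1) (s+u+1) * bcoef (t-1-s))))"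
    by (simp add: sum_distrib_left sum_distrib_right sum_divide_distrib mult_ac)
  also have "\<dots> = (-1)^(t-1) * (\<Sum>u<t. ?x^u / fact (2*u+1) * conv_coef (2*u+1) (t+u))"
    unfolding conv_coef_odd_shift by (simp only: sum_distrib_left)
  finally show ?thesis .
qed

lemma cosh_series: "(\<lambda>u. (a^2)^u / fact (2*u)) sums cosh (a::real)"
proof -
  have "(\<lambda>n. \<Sum>k\<in>{n*2..<n*2+2}. if even k then a^k /\<^sub>R fact k else 0) sums cosh a"
    by (rule sums_group[OF cosh_converges]) simp
  moreover have "{n*2..<n*2+2} = {n*2, Suc (n*2)}" for n by auto
  ultimately show ?thesis by (simp add: power_mult[symmetric] mult.commute divide_inverse)
qed

lemma sinh_div_series: "a \<noteq> 0 \<Longrightarrow> (\<lambda>u. (a^2)^u / fact (2*u+1)) sums (sinh (a::real) / a)"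
proof -
  assume a: "a \<noteq> 0"
  have "(\<lambda>n. \<Sum>k\<in>{n*2..<n*2+2}. if even k then 0 else a^k /\<^sub>R fact k) sums sinh a"
    by (rule sums_group[OF sinh_converges]) simp
  moreover have "{n*2..<n*2+2} = {n*2, Suc (n*2)}" for n by auto
  ultimately have "(\<lambda>n. (a^2)^n / fact (2*n+1) * a) sums sinh a"
    by (simp add: power_mult[symmetric] divide_inverse ac_simps del: fact_Suc)
  then have "(\<lambda>n. (a^2)^n / fact (2*n+1) * a / a) sums (sinh a / a)" by (rule sums_divide)
  then show ?thesis using a by simp
qed

lemma normalized_S2_sums:
  assumes "t \<ge> 1"
  shows "(\<lambda>u. - ((alpha^2)^u * odd_defect u t) / (fact (2*u+1) * bcoef t)) sums
    (S2 t / ((-3/2) gchoose t) - (-1)^t / ((-3/2) gchoose t) * cosh alpha + sinh alpha / alpha)"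
proof -
  define x where "x = alpha^2"
  have x: "pi^2/36 = x" unfolding x_def alpha_def by (simp add: power_divide)
  have b: "bcoef t > 0" by (rule bcoef_pos)
  have "(-1::real)^(t-1) = - ((-1)^t)" using assms by (cases t) simp_all
  then have S2: "S2 t / ((-3/2) gchoose t) = (\<Sum>u<t. - (x^u / fact (2*u+1) * conv_coef (2*u+1) (t+u)) / bcoef t)"
    unfolding S2_eq_conv_coef gbinomial_neg_three_halves x
    by (simp add: field_simps sum_negf sum_divide_distrib)
  have "(\<lambda>u. - (x^u / fact (2*u+1) * conv_coef (2*u+1) (t+u)) / bcoef t) sums (S2 t / ((-3/2) gchoose t))"
    unfolding S2 by (intro sums_finite) (auto simp: not_less conv_coef_eq_0[simplified])
  moreover have "(\<lambda>u. x^u / fact (2*u) / bcoef t) sums (cosh alpha / bcoef t)"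
    unfolding x_def by (intro sums_divide cosh_series)
  moreover have "(\<lambda>u. x^u / fact (2*u+1)) sums (sinh alpha / alpha)"
    unfolding x_def by (rule sinh_div_series) (simp add: alpha_def)
  ultimately have "(\<lambda>u. - (x^u / fact (2*u+1) * conv_coef (2*u+1) (t+u)) / bcoef t
      - x^u / fact (2*u) / bcoef t + x^u / fact (2*u+1)) sums
      (S2 t / ((-3/2) gchoose t) - cosh alpha / bcoef t + sinh alpha / alpha)"
    by (intro sums_add sums_diff)
  moreover have "- (x^u / fact (2*u+1) * conv_coef (2*u+1) (t+u)) / bcoef t - x^u / fact (2*u) / bcoef t
      + x^u / fact (2*u+1) = - (x^u * odd_defect u t) / (fact (2*u+1) * bcoef t)" for u
  proof -
    define F :: real where "F = fact (2*u)"
    define K where "K = 2 * real u + 1"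
    have pos: "F > 0" "K > 0" unfolding F_def K_def by simp_all
    have "fact (2*u+1) = K * F" unfolding F_def K_def by simp
    then show ?thesis
      using b pos unfolding odd_defect_def K_def[symmetric] F_def[symmetric] by (simp add: field_simps)
  qed
  ultimately show ?thesis
    unfolding gbinomial_neg_three_halves x_def by (simp add: power_mult_distrib[symmetric])
qed

lemma twenty_pow_le_fact: "3 * (20::real)^Suc v \<le> 10 * fact (2 * Suc v + 1)"
proof (induction v)
  case 0
  then show ?case by (simp add: eval_nat_numeral)
next
  case (Suc v)
  have "3 * (20::real)^Suc (Suc v) = 20 * (3 * 20^Suc v)" by simp
  also have "\<dots> \<le> 20 * (10 * fact (2 * Suc v + 1))"
    using Suc.IH by simp
  also have "\<dots> \<le> (2 * real v + 4) * (2 * real v + 5) * (10 * fact (2 * Suc v + 1))"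
    by (intro mult_right_mono) (simp_all add: algebra_simps)
  also have "\<dots> = 10 * fact (2 * Suc (Suc v) + 1)"
    by (simp add: algebra_simps)
  finally show ?case .
qed

lemma odd_defect_term_bound:
  "\<bar>(alpha^2)^u * odd_defect u t / (fact (2*u+1) * bcoef t)\<bar> \<le> 10/3 * (pi^2/90)^u / (real t + 1)"
  if "u \<ge> 1"
proof -
  define x where "x = alpha^2"
  have x: "x \<ge> 0" "x * 8 = 20 * (pi^2/90)" unfolding x_def alpha_def by (simp_all add: power_divide)
  have b: "bcoef t > 0" by (rule bcoef_pos)
  have "\<bar>x^u * odd_defect u t / (fact (2*u+1) * bcoef t)\<bar> = x^u * \<bar>odd_defect u t\<bar> / (fact (2*u+1) * bcoef t)"
    using b x by (simp add: abs_mult)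
  also have "\<dots> \<le> x^u * ((8^u - 1) * (bcoef t / (real t + 1))) / (fact (2*u+1) * bcoef t)"
    using b x defect_bounds[of u t] by (intro divide_right_mono mult_left_mono) auto
  also have "\<dots> = x^u * (8^u - 1) / fact (2*u+1) / (real t + 1)"
    using b by (simp add: divide_simps)
  also have "\<dots> \<le> x^u * 8^u / fact (2*u+1) / (real t + 1)"
    using x by (intro divide_right_mono mult_left_mono) simp_all
  also have "\<dots> = (pi^2/90)^u * (20^u / fact (2*u+1)) / (real t + 1)"
    using x(2) by (metis power_mult_distrib times_divide_eq_right mult.commute)
  also have "\<dots> \<le> (pi^2/90)^u * (10/3) / (real t + 1)"
    using twenty_pow_le_fact[of "u - 1"] that
    by (intro divide_right_mono mult_left_mono) (simp_all add: divide_simps)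
  finally show ?thesis unfolding x_def by (simp add: mult.commute)
qed

theorem mainTheorem11:
  fixes t :: nat
  assumes "t \<ge> 1"
  shows "- 11 / (10 * real t) <
           S2 t / ((-3/2) gchoose t) - (-1)^t / ((-3/2) gchoose t) * cosh alpha + sinh alpha / alpha
         \<and> S2 t / ((-3/2) gchoose t) - (-1)^t / ((-3/2) gchoose t) * cosh alpha + sinh alpha / alpha
           < 1 / real t"
proof -
  define Q where "Q = S2 t / ((-3/2) gchoose t) - (-1)^t / ((-3/2) gchoose t) * cosh alpha + sinh alpha / alpha"
  define q where "q = pi^2/90"
  have q: "0 < q" "q < 16/90"
    unfolding q_def using pi_gt_zero power_strict_mono[OF pi_less_4, of 2] by simp_all
  let ?T = "\<lambda>u. - ((alpha^2)^u * odd_defect u t) / (fact (2*u+1) * bcoef t)"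
  have "(\<lambda>u. ?T (Suc u)) sums Q"
    using normalized_S2_sums[OF assms] unfolding Q_def by (intro sums_Suc_iff[THEN iffD2]) simp
  moreover have "(\<lambda>u. 10/3 * q^Suc u / (real t + 1)) sums (10/3 * q / (1 - q) / (real t + 1))"
    using sums_divide[OF sums_mult[OF geometric_sums], of q "10/3 * q" "real t + 1"] q
    by (simp add: mult.assoc)
  moreover have "norm (?T (Suc u)) \<le> 10/3 * q^Suc u / (real t + 1)" for u
    using odd_defect_term_bound[of "Suc u" t] unfolding q_def by simp
  ultimately have "\<bar>Q\<bar> \<le> 10/3 * q / (1 - q) / (real t + 1)"
    using norm_sums_le by fastforce
  also have "\<dots> < 1 / (real t + 1)"
    using q by (intro divide_strict_right_mono) (simp_all add: field_simps)
  also have "\<dots> < 1 / real t"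
    using assms by (simp add: frac_less2)
  finally show ?thesis
    unfolding Q_def[symmetric] using assms by (simp add: abs_less_iff field_simps)
qed

end
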